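(* Let $G$ be a gap sequence of genus $g$ with associated partition $\lambda$, and $0\le k\le g-1$. Then (i) $a^{(k)}_1>\dots>a^{(k)}_{m_k}\ge1$; (ii) each $a^{(k)}_i$ belongs to $G$; (iii) $\sum_{i=1}^{m_k}a^{(k)}_i=N_{\lambda,k}$.
   Context: A gap sequence of genus $g\ge1$ is a set $G\subset\mathbb Z_{\ge0}$ with $\#G=g$ whose complement $G^c$ contains $0$ and is closed under addition; $G=\{w_1<\dots<w_g\}$, $G^c=\{0=w_1^*<w_2^*<\cdots\}$, $\lambda=(w_g,\dots,w_1)-(g-1,\dots,1,0)$. $m_k=\#\{i:w_i^*<g-k\}$, $a^{(k)}_j=w_{g-k-j+1}-w_j^*$ for $1\le j\le m_k$. $N_{\lambda,k}=\lambda_{k+1}+\dots+\lambda_g$. *)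

theory Defs
  imports Main "HOL-Library.Infinite_Set"
begin

definition gap_sequence :: "nat set \<Rightarrow> bool" where
  "gap_sequence G \<longleftrightarrow> finite G \<and> card G \<ge> 1 \<and> 0 \<notin> G \<and>
     (\<forall>x y. x \<notin> G \<longrightarrow> y \<notin> G \<longrightarrow> x + y \<notin> G)"

definition gap_w :: "nat set \<Rightarrow> nat \<Rightarrow> nat" where
  "gap_w G i = sorted_list_of_set G ! (i - 1)"

text \<open>w*_i, the i-th smallest non-gap (1-indexed, so w*_1 = 0).\<close>
definition gap_wstar :: "nat set \<Rightarrow> nat \<Rightarrow> nat" where
  "gap_wstar G i = enumerate (- G) (i - 1)"

definition gap_lambda :: "nat set \<Rightarrow> nat \<Rightarrow> int" where
  "gap_lambda G i = int (gap_w G (card G + 1 - i)) - int (card G - i)"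

definition gap_N :: "nat set \<Rightarrow> nat \<Rightarrow> int" where
  "gap_N G k = (\<Sum>i = k + 1..card G. gap_lambda G i)"

definition gap_m :: "nat set \<Rightarrow> nat \<Rightarrow> nat" where
  "gap_m G k = card {i. 1 \<le> i \<and> int (gap_wstar G i) < int (card G) - int k}"

definition gap_a :: "nat set \<Rightarrow> nat \<Rightarrow> nat \<Rightarrow> int" where
  "gap_a G k j = int (gap_w G (card G - k - j + 1)) - int (gap_wstar G j)"

end

theory Submission
  imports Defs
begin

text \<open>Put n = g - k. Below n lie exactly m = m_k non-gaps w*_1 < ... < w*_m and
p = n - m gaps w_1 < ... < w_p, so the gaps w_(p+1) < ... < w_n all exceed every w*_j.
Hence a_j = w_(n+1-j) - w*_j is positive and strictly decreasing, and it is a gap because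
w*_j + a_j is a gap while w*_j is not. For the sum, N_(lambda,k) = sum over t <= n of
w_t - (t - 1), and 0 + ... + (n - 1) is the sum of the gaps below n plus that of the
non-gaps below n, which leaves w_(p+1) + ... + w_n - (w*_1 + ... + w*_m) = a_1 + ... + a_m.\<close>

text \<open>The index set I is {..<card A} for a finite A (listed by sorted_list_of_set) and
UNIV for an infinite A (listed by enumerate).\<close>
locale increasing_enumeration =
  fixes f :: "nat \<Rightarrow> nat" and I A :: "nat set"
  assumes strict_mono: "strict_mono_on I f"
    and image_eq: "f ` I = A"
    and downward_closed: "j \<in> I \<Longrightarrow> i < j \<Longrightarrow> i \<in> I"
begin

lemma less_iff: "i \<in> I \<Longrightarrow> j \<in> I \<Longrightarrow> f i < f j \<longleftrightarrow> i < j"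
  using strict_mono by (metis less_asym linorder_neqE_nat strict_mono_onD)

lemma card_less:
  assumes "j \<in> I"
  shows "card {a \<in> A. a < f j} = j"
proof -
  have "{a \<in> A. a < f j} = f ` {..<j}"
    using assms image_eq downward_closed less_iff by auto
  moreover have "inj_on f {..<j}"
    using strict_mono_on_imp_inj_on[OF strict_mono]
    by (rule inj_on_subset) (auto intro: downward_closed[OF assms])
  ultimately show ?thesis by (simp add: card_image)
qed

lemma less_iff_less_card:
  assumes "j \<in> I"
  shows "f j < n \<longleftrightarrow> j < card (A \<inter> {..<n})"
proof
  assume "f j < n"
  then have "{a \<in> A. a < f j} \<subset> A \<inter> {..<n}"
    using assms image_eq by auto
  then show "j < card (A \<inter> {..<n})"
    using psubset_card_mono[of "A \<inter> {..<n}"] card_less[OF assms]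
    by (metis finite_Int finite_lessThan)
next
  assume "j < card (A \<inter> {..<n})"
  moreover have "card (A \<inter> {..<n}) \<le> j" if "n \<le> f j"
  proof -
    have "A \<inter> {..<n} \<subseteq> {a \<in> A. a < f j}" using that by auto
    then show ?thesis
      using card_mono[of "{a \<in> A. a < f j}"] card_less[OF assms] by fastforce
  qed
  ultimately show "f j < n" by linarith
qed

lemma lessThan_card_Int_lessThan_subset: "{..<card (A \<inter> {..<n})} \<subseteq> I"
proof
  fix j assume j: "j \<in> {..<card (A \<inter> {..<n})}"
  show "j \<in> I"
  proof (rule ccontr)
    assume "j \<notin> I"
    then have "I \<subseteq> {..<j}"
      using downward_closed by (metis lessThan_iff linorder_neqE_nat subsetI)
    then have "card A \<le> j"
      using image_eq card_image_le[of I f] card_mono[of "{..<j}" I]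
      by (metis card_lessThan finite_lessThan finite_subset le_trans)
    moreover have "card (A \<inter> {..<n}) \<le> card A"
      using \<open>I \<subseteq> {..<j}\<close> image_eq by (intro card_mono) (auto intro: finite_subset)
    ultimately show False using j by simp
  qed
qed

lemma Int_lessThan_eq_image: "A \<inter> {..<n} = f ` {..<card (A \<inter> {..<n})}"
  using lessThan_card_Int_lessThan_subset less_iff_less_card image_eq by fastforce

lemma sum_Int_lessThan:
  "(\<Sum>a \<in> A \<inter> {..<n}. h a) = (\<Sum>j < card (A \<inter> {..<n}). h (f j))"
proof -
  have "inj_on f {..<card (A \<inter> {..<n})}"
    using strict_mono_on_imp_inj_on[OF strict_mono] lessThan_card_Int_lessThan_subset
    by (rule inj_on_subset)
  then show ?thesis
    by (subst Int_lessThan_eq_image) (simp add: sum.reindex)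
qed

end

lemma increasing_enumeration_sorted_list_of_set:
  assumes "finite A"
  shows "increasing_enumeration ((!) (sorted_list_of_set A)) {..<card A} A"
proof
  show "strict_mono_on {..<card A} ((!) (sorted_list_of_set A))"
    by (intro strict_mono_onI) (simp add: sorted_wrt_nth_less)
  show "(!) (sorted_list_of_set A) ` {..<card A} = A"
  proof -
    have "(!) xs ` {..<length xs} = set xs" for xs :: "nat list"
      by (auto simp: in_set_conv_nth)
    then show ?thesis
      using assms by (metis length_sorted_list_of_set set_sorted_list_of_set)
  qed
qed simp

lemma increasing_enumeration_enumerate:
  assumes "infinite A"
  shows "increasing_enumeration (enumerate A) UNIV A"
proof
  show "strict_mono_on UNIV (enumerate A)"
    using assms by (intro strict_mono_onI) (simp add: enumerate_mono)
  show "enumerate A ` UNIV = A"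
    using bij_betw_imp_surj_on[OF bij_enumerate[OF assms]] .
qed simp

lemma sum_Int_lessThan_add_sum_Compl:
  fixes n :: nat
  shows "(\<Sum>x \<in> A \<inter> {..<n}. h x) + (\<Sum>x \<in> - A \<inter> {..<n}. h x) = (\<Sum>x<n. h x)"
proof -
  have "{..<n} - A = - A \<inter> {..<n}" by blast
  then show ?thesis
    using sum.Int_Diff[of "{..<n}" h A] by (simp add: Int_commute)
qed

lemma card_Int_lessThan_add_card_Compl: "card (A \<inter> {..<n::nat}) + card (- A \<inter> {..<n}) = n"
  using sum_Int_lessThan_add_sum_Compl[of "\<lambda>_. 1::nat" A n] by simp

lemma gap_N_eq_sum_gap_w: "gap_N G k = (\<Sum>t = 1..card G - k. int (gap_w G t) - int (t - 1))"
  unfolding gap_N_def gap_lambda_def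
  by (rule sum.reindex_bij_witness[of _ "\<lambda>t. card G + 1 - t" "\<lambda>i. card G + 1 - i"]) auto

context
  fixes G :: "nat set"
  assumes finite_gaps: "finite G"
begin

interpretation gaps: increasing_enumeration "(!) (sorted_list_of_set G)" "{..<card G}" G
  using finite_gaps by (rule increasing_enumeration_sorted_list_of_set)

interpretation nongaps: increasing_enumeration "enumerate (- G)" UNIV "- G"
  using finite_gaps by (intro increasing_enumeration_enumerate) (simp add: Compl_eq_Diff_UNIV)

lemma gap_w_mem: "1 \<le> i \<Longrightarrow> i \<le> card G \<Longrightarrow> gap_w G i \<in> G"
  unfolding gap_w_def using gaps.image_eq by auto

lemma gap_wstar_not_mem: "gap_wstar G j \<notin> G"
  unfolding gap_wstar_def using nongaps.image_eq by auto

lemma gap_w_strict_mono: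
  "1 \<le> i \<Longrightarrow> i < j \<Longrightarrow> j \<le> card G \<Longrightarrow> gap_w G i < gap_w G j"
  unfolding gap_w_def by (subst gaps.less_iff) auto

lemma gap_wstar_strict_mono: "1 \<le> i \<Longrightarrow> i < j \<Longrightarrow> gap_wstar G i < gap_wstar G j"
  unfolding gap_wstar_def by (subst nongaps.less_iff) auto

lemma gap_w_less_iff_le_card:
  "1 \<le> i \<Longrightarrow> i \<le> card G \<Longrightarrow> gap_w G i < n \<longleftrightarrow> i \<le> card (G \<inter> {..<n})"
  unfolding gap_w_def by (subst gaps.less_iff_less_card) auto

lemma gap_wstar_less_iff_le_card:
  "1 \<le> j \<Longrightarrow> gap_wstar G j < n \<longleftrightarrow> j \<le> card (- G \<inter> {..<n})"
  unfolding gap_wstar_def by (subst nongaps.less_iff_less_card) auto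

lemma sum_gaps_below:
  "(\<Sum>x \<in> G \<inter> {..<n}. h x) = (\<Sum>i = 1..card (G \<inter> {..<n}). h (gap_w G i))"
  unfolding gap_w_def gaps.sum_Int_lessThan by (simp add: sum.atLeast1_atMost_eq)

lemma sum_nongaps_below:
  "(\<Sum>x \<in> - G \<inter> {..<n}. h x) = (\<Sum>j = 1..card (- G \<inter> {..<n}). h (gap_wstar G j))"
  unfolding gap_wstar_def nongaps.sum_Int_lessThan by (simp add: sum.atLeast1_atMost_eq)

lemma gap_m_eq_card_nongaps_below: "gap_m G k = card (- G \<inter> {..<card G - k})"
proof -
  have "{i. 1 \<le> i \<and> int (gap_wstar G i) < int (card G) - int k}
      = {1..card (- G \<inter> {..<card G - k})}"
  proof -
    have "int (gap_wstar G i) < int (card G) - int k \<longleftrightarrow> gap_wstar G i < card G - k" for i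
      by linarith
    then show ?thesis
      using gap_wstar_less_iff_le_card by auto
  qed
  then show ?thesis
    unfolding gap_m_def by simp
qed

lemma gap_m_add_card_gaps_below: "gap_m G k + card (G \<inter> {..<card G - k}) = card G - k"
  using card_Int_lessThan_add_card_Compl[of G "card G - k"] gap_m_eq_card_nongaps_below by simp

lemma gap_wstar_less_le_gap_w:
  assumes "1 \<le> j" "j \<le> gap_m G k"
  shows "gap_wstar G j < card G - k"
    and "card G - k \<le> gap_w G (card G - k - j + 1)"
    and "card G - k - j + 1 \<le> card G"
proof -
  note m = gap_m_add_card_gaps_below[of k]
  show "gap_wstar G j < card G - k"
    using assms gap_wstar_less_iff_le_card gap_m_eq_card_nongaps_below by simp
  show "card G - k - j + 1 \<le> card G"
    using m assms by linarith
  moreover have "\<not> card G - k - j + 1 \<le> card (G \<inter> {..<card G - k})"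
    using m assms by linarith
  ultimately show "card G - k \<le> gap_w G (card G - k - j + 1)"
    using gap_w_less_iff_le_card[of "card G - k - j + 1" "card G - k"] by simp
qed

lemma gap_a_eq:
  "1 \<le> j \<Longrightarrow> j \<le> gap_m G k \<Longrightarrow>
    gap_a G k j = int (gap_w G (card G - k - j + 1) - gap_wstar G j)"
  unfolding gap_a_def using gap_wstar_less_le_gap_w[of j k] by simp

lemma gap_a_pos: "1 \<le> j \<Longrightarrow> j \<le> gap_m G k \<Longrightarrow> 1 \<le> gap_a G k j"
  using gap_a_eq gap_wstar_less_le_gap_w[of j k] by simp

lemma gap_a_strict_antimono:
  assumes "1 \<le> i" "i < j" "j \<le> gap_m G k"
  shows "gap_a G k j < gap_a G k i"
proof -
  have "gap_w G (card G - k - j + 1) < gap_w G (card G - k - i + 1)"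
    using assms gap_wstar_less_le_gap_w[of j k] gap_m_add_card_gaps_below[of k]
    by (intro gap_w_strict_mono) auto
  moreover have "gap_wstar G i < gap_wstar G j"
    using assms gap_wstar_strict_mono by simp
  ultimately show ?thesis
    unfolding gap_a_def by simp
qed

lemma sum_gap_a: "(\<Sum>j = 1..gap_m G k. gap_a G k j) = gap_N G k"
proof -
  define n where "n = card G - k"
  define m where "m = gap_m G k"
  define p where "p = card (G \<inter> {..<n})"
  have n: "n = p + m"
    using gap_m_add_card_gaps_below[of k] unfolding n_def m_def p_def by simp
  have "(\<Sum>j = 1..m. gap_a G k j)
      = (\<Sum>j = 1..m. int (gap_w G (n - j + 1)) - int (gap_wstar G j))"
    unfolding gap_a_def n_def m_def by simp
  also have "\<dots> = (\<Sum>t = p + 1..n. int (gap_w G t)) - (\<Sum>j = 1..m. int (gap_wstar G j))"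
    unfolding sum_subtractf n
    by (simp, rule sum.reindex_bij_witness[of _ "\<lambda>t. p + m + 1 - t" "\<lambda>j. p + m + 1 - j"])
      (auto simp: Suc_diff_le)
  also have "\<dots> = (\<Sum>t = 1..n. int (gap_w G t))
      - ((\<Sum>t = 1..p. int (gap_w G t)) + (\<Sum>j = 1..m. int (gap_wstar G j)))"
    using sum.ub_add_nat[of 1 p "\<lambda>t. int (gap_w G t)" m] n by simp
  also have "(\<Sum>t = 1..p. int (gap_w G t)) + (\<Sum>j = 1..m. int (gap_wstar G j))
      = (\<Sum>t = 1..n. int (t - 1))"
    using sum_gaps_below[of int n] sum_nongaps_below[of int n]
      sum_Int_lessThan_add_sum_Compl[of int G n]
    unfolding p_def m_def gap_m_eq_card_nongaps_below n_def
    by (simp add: sum.atLeast1_atMost_eq)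
  finally show ?thesis
    unfolding gap_N_eq_sum_gap_w m_def n_def by (simp add: sum_subtractf)
qed

end

lemma gap_a_mem:
  assumes G: "gap_sequence G" and j: "1 \<le> j" "j \<le> gap_m G k"
  shows "gap_a G k j \<in> int ` G"
proof -
  have fin: "finite G" and closed: "\<And>x y. x \<notin> G \<Longrightarrow> y \<notin> G \<Longrightarrow> x + y \<notin> G"
    using G unfolding gap_sequence_def by auto
  define w where "w = gap_w G (card G - k - j + 1)"
  define w' where "w' = gap_wstar G j"
  have "w \<in> G" and "w' \<notin> G" and "w' < w"
    using gap_wstar_less_le_gap_w[OF fin j] gap_w_mem[OF fin] gap_wstar_not_mem[OF fin]
    unfolding w_def w'_def by auto
  then have "w - w' \<in> G" \<comment> \<open>otherwise \<open>w = w' + (w - w')\<close> would be a sum of non-gaps\<close>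
    using closed[of w' "w - w'"] by auto
  then show ?thesis
    using gap_a_eq[OF fin j] unfolding w_def w'_def by simp
qed

theorem lemma2p1:
  fixes G :: "nat set" and k :: nat
  assumes "gap_sequence G"
    and "k \<le> card G - 1"
  shows "(\<forall>i j. 1 \<le> i \<and> i < j \<and> j \<le> gap_m G k \<longrightarrow> gap_a G k i > gap_a G k j)
       \<and> (\<forall>i. 1 \<le> i \<and> i \<le> gap_m G k \<longrightarrow> gap_a G k i \<ge> 1)
       \<and> (\<forall>i. 1 \<le> i \<and> i \<le> gap_m G k \<longrightarrow> gap_a G k i \<in> int ` G)
       \<and> (\<Sum>i = 1..gap_m G k. gap_a G k i) = gap_N G k"
proof -
  have fin: "finite G"
    using assms(1) unfolding gap_sequence_def by simp
  show ?thesis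
    using gap_a_strict_antimono[OF fin] gap_a_pos[OF fin] gap_a_mem[OF assms(1)]
      sum_gap_a[OF fin]
    by (intro conjI allI impI) auto
qed

end
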